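(* Let $G$ be a graph, $O\subseteq V(G)$, $r$ and $m$ non-negative integers, and $\prec$ a linear ordering of $V(G)$. Let $O'$ be the set of all $(r,\prec,m,O)$-rich vertices of $G$. If the weak $r$-coloring number of $(G,\prec)$ is at most $b$, then $|O'|\le \frac{b}{m}|O|$.
   Context: For a linear ordering $\prec$ of $V(G)$ and a non-negative integer $r$, a vertex $u$ is weakly $(r,\prec)$-reachable from a vertex $v\succeq u$ if there is a path $P$ in $G$ from $v$ to $u$ of length at most $r$ such that all vertices of $V(P)\setminus\{u\}$ are greater than $u$ in $\prec$. $L_{r,\prec}(v)$ is the set of vertices weakly $(r,\prec)$-reachable from $v$, and $R_{r,\prec}(u)$ is the set of vertices $v$ from which $u$ is weakly $(r,\prec)$-reachable. The weak $r$-coloring number of $(G,\prec)$ is $\max_{v\in V(G)}|L_{r,\prec}(v)|$. For $O\subseteq V(G)$ and a non-negative integer $m$, a vertex $v$ is $(r,\prec,m,O)$-rich if $|R_{r,\prec}(v)\cap O|\ge m$. *)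

theory Defs
  imports Complex_Main
begin

definition graph :: "'a set \<Rightarrow> ('a \<Rightarrow> 'a \<Rightarrow> bool) \<Rightarrow> bool" where
  "graph V E \<longleftrightarrow> finite V \<and> (\<forall>x y. E x y \<longrightarrow> x \<in> V \<and> y \<in> V) \<and>
     (\<forall>x y. E x y \<longrightarrow> E y x) \<and> (\<forall>x. \<not> E x x)"

text \<open>A path given as its vertex list (distinct vertices, consecutive ones adjacent).
  Its length is the number of edges, i.e. length P - 1.\<close>
definition is_path :: "'a set \<Rightarrow> ('a \<Rightarrow> 'a \<Rightarrow> bool) \<Rightarrow> 'a list \<Rightarrow> bool" where
  "is_path V E P \<longleftrightarrow> P \<noteq> [] \<and> distinct P \<and> set P \<subseteq> V \<and>
     (\<forall>i. Suc i < length P \<longrightarrow> E (P ! i) (P ! Suc i))"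

text \<open>Strict order induced by a linear order relation R (pairs (x,y) meaning x \<preceq> y).\<close>
definition less_ord :: "('a \<times> 'a) set \<Rightarrow> 'a \<Rightarrow> 'a \<Rightarrow> bool" where
  "less_ord R x y \<longleftrightarrow> (x, y) \<in> R \<and> x \<noteq> y"

text \<open>u is weakly (r,R)-reachable from v (v \<succeq> u).\<close>
definition weakly_reachable ::
  "'a set \<Rightarrow> ('a \<Rightarrow> 'a \<Rightarrow> bool) \<Rightarrow> ('a \<times> 'a) set \<Rightarrow> nat \<Rightarrow> 'a \<Rightarrow> 'a \<Rightarrow> bool" where
  "weakly_reachable V E R r v u \<longleftrightarrow> u \<in> V \<and> v \<in> V \<and> (u, v) \<in> R \<and>
     (\<exists>P. is_path V E P \<and> hd P = v \<and> last P = u \<and> length P - 1 \<le> r \<and>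
          (\<forall>x \<in> set P - {u}. less_ord R u x))"

definition L_set :: "'a set \<Rightarrow> ('a \<Rightarrow> 'a \<Rightarrow> bool) \<Rightarrow> ('a \<times> 'a) set \<Rightarrow> nat \<Rightarrow> 'a \<Rightarrow> 'a set" where
  "L_set V E R r v = {u. weakly_reachable V E R r v u}"

definition R_set :: "'a set \<Rightarrow> ('a \<Rightarrow> 'a \<Rightarrow> bool) \<Rightarrow> ('a \<times> 'a) set \<Rightarrow> nat \<Rightarrow> 'a \<Rightarrow> 'a set" where
  "R_set V E R r u = {v. weakly_reachable V E R r v u}"

definition wcol :: "'a set \<Rightarrow> ('a \<Rightarrow> 'a \<Rightarrow> bool) \<Rightarrow> ('a \<times> 'a) set \<Rightarrow> nat \<Rightarrow> nat" where
  "wcol V E R r = Max ((\<lambda>v. card (L_set V E R r v)) ` V)"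

definition rich :: "'a set \<Rightarrow> ('a \<Rightarrow> 'a \<Rightarrow> bool) \<Rightarrow> ('a \<times> 'a) set \<Rightarrow> nat \<Rightarrow> nat \<Rightarrow> 'a set \<Rightarrow> 'a \<Rightarrow> bool" where
  "rich V E R r m Ob v \<longleftrightarrow> card (R_set V E R r v \<inter> Ob) \<ge> m"

end

theory Submission
  imports Defs
begin

text \<open>Double counting the pairs (u, v) with u \<in> O and v a rich vertex weakly reachable from u:
  every rich v accounts for at least m such pairs, and every u for at most
  |L(u)| \<le> b of them.\<close>

lemma double_counting_le:
  fixes P :: "'a \<Rightarrow> 'b \<Rightarrow> bool"
  assumes "finite A" "finite B"
    and many: "\<And>y. y \<in> B \<Longrightarrow> m \<le> card {x \<in> A. P x y}"
    and few: "\<And>x. x \<in> A \<Longrightarrow> card {y \<in> B. P x y} \<le> k"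
  shows "m * card B \<le> k * card A"
proof -
  have "m * card B = (\<Sum>y\<in>B. m)" by simp
  also have "\<dots> \<le> (\<Sum>y\<in>B. card {x \<in> A. P x y})" using many by (rule sum_mono)
  also have "\<dots> = (\<Sum>x\<in>A. card {y \<in> B. P x y})"
    using sum.swap_restrict[OF assms(1,2), of "\<lambda>_ _. 1::nat" P] by simp
  also have "\<dots> \<le> (\<Sum>x\<in>A. k)" using few by (rule sum_mono)
  finally show ?thesis by (simp add: mult.commute)
qed

lemma finite_L_set:
  assumes "finite V"
  shows "finite (L_set V E R r v)"
  using assms by (rule finite_subset[rotated]) (auto simp: L_set_def weakly_reachable_def)

lemma card_L_set_le_wcol:
  assumes "finite V" "v \<in> V"
  shows "card (L_set V E R r v) \<le> wcol V E R r"
  unfolding wcol_def using assms by (auto intro: Max_ge)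

lemma card_rich_le_wcol_card:
  assumes "finite V" "Ob \<subseteq> V"
  shows "m * card {v \<in> V. rich V E R r m Ob v} \<le> wcol V E R r * card Ob"
proof (rule double_counting_le)
  let ?Rich = "{v \<in> V. rich V E R r m Ob v}"
  show "finite Ob" using assms finite_subset by blast
  show "finite ?Rich" using assms(1) by simp
  fix v assume "v \<in> ?Rich"
  moreover have "R_set V E R r v \<inter> Ob = {u \<in> Ob. u \<in> R_set V E R r v}" by blast
  ultimately show "m \<le> card {u \<in> Ob. u \<in> R_set V E R r v}" by (simp add: rich_def)
next
  let ?Rich = "{v \<in> V. rich V E R r m Ob v}"
  fix u assume "u \<in> Ob"
  have "{v \<in> ?Rich. u \<in> R_set V E R r v} \<subseteq> L_set V E R r u"
    by (auto simp: R_set_def L_set_def)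
  then have "card {v \<in> ?Rich. u \<in> R_set V E R r v} \<le> card (L_set V E R r u)"
    using finite_L_set[OF assms(1)] by (rule card_mono[rotated])
  also have "\<dots> \<le> wcol V E R r" using assms \<open>u \<in> Ob\<close> by (intro card_L_set_le_wcol) auto
  finally show "card {v \<in> ?Rich. u \<in> R_set V E R r v} \<le> wcol V E R r" .
qed

theorem mainTheorem3:
  fixes V :: "'a set" and E :: "'a \<Rightarrow> 'a \<Rightarrow> bool" and R :: "('a \<times> 'a) set"
    and Ob :: "'a set" and r m b :: nat
  assumes "graph V E"
    and "linear_order_on V R"
    and "Ob \<subseteq> V"
    and "m > 0"
    and "wcol V E R r \<le> b"
  shows "real (card {v \<in> V. rich V E R r m Ob v}) \<le> (real b / real m) * real (card Ob)"
proof -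
  have "finite V" using assms(1) by (simp add: graph_def)
  then have "m * card {v \<in> V. rich V E R r m Ob v} \<le> b * card Ob"
    using card_rich_le_wcol_card[OF _ assms(3)] assms(5)
    by (meson le_trans mult_le_mono1)
  then have "real m * real (card {v \<in> V. rich V E R r m Ob v}) \<le> real b * real (card Ob)"
    by (metis of_nat_le_iff of_nat_mult)
  then show ?thesis using assms(4) by (simp add: field_simps)
qed

end
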